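(* Let $J=\{2\}^*\{1\}\{2\}^*\{1\}^*\cup\{2\}^*\subseteq\mathcal{A}_2^*$. Then $(\mathcal{A}_2,J)$ is a biautomatic structure for $\mathrm{rps}_2$.
   Context: Let $\mathcal{A}_2=\{1<2\}$. An rPS tableau is a finite (possibly empty) sequence of nonempty bottom-justified columns of boxes filled with positive integers, such that the entries of each column are weakly decreasing from top to bottom and the bottom entries of the columns form a strictly increasing sequence from left to right. Right insertion of a symbol $a$ into an rPS tableau $B$: if $a$ is strictly greater than every entry of the bottom row, append a new column consisting of $a$ at the right end; otherwise, let $z$ be the leftmost bottom-row entry with $z\geq a$ and put $a$ in a new box at the bottom of the column of $z$ (the previous entries of that column move up one box). For $w=w_1\cdots w_k$, $\mathfrak{R}_r(w)$ is obtained by starting with the empty tableau and right-inserting $w_1,\dots,w_k$ in order. The monoid $\mathrm{rps}_2$ is the quotient of $\mathcal{A}_2^*$ by the congruence $u\equiv v\iff\mathfrak{R}_r(u)=\mathfrak{R}_r(v)$; words are identified with the elements they represent. For an alphabet $\Sigma$ and a padding symbol $\$\notin\Sigma$, $\delta_R:\Sigma^*\times\Sigma^*\to((\Sigma\cup\{\$\})\times(\Sigma\cup\{\$\}))^*$ sends $(u_1\cdots u_m,v_1\cdots v_p)$ to the word of pairs $(u_i,v_i)$ obtained after padding the shorter word on the right with $\$$'s to equal length; $\delta_L$ is the same with padding on the left. For a monoid $M$ generated by finite $\Sigma$ and a regular language $L\subseteq\Sigma^*$ mapping onto $M$, define $L_a=\{(u,v)\in L\times L: ua=_M v\}$ and ${}_aL=\{(u,v)\in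 L\times L: au=_M v\}$. $(\Sigma,L)$ is a biautomatic structure for $M$ if $(L_a)\delta_R$, $({}_aL)\delta_R$, $(L_a)\delta_L$ and $({}_aL)\delta_L$ are regular languages for every $a\in\Sigma\cup\{\varepsilon\}$. *)

theory Defs
  imports Main
begin

text \<open>Symbols of A_2 = {1 < 2} are the natural numbers 1 and 2; words are lists.
An rPS tableau is a list of columns (left to right); each column is a list
read from bottom to top (head = bottom entry).\<close>

type_synonym tableau = "nat list list"

fun rinsert :: "nat \<Rightarrow> tableau \<Rightarrow> tableau" where
  "rinsert a [] = [[a]]"
| "rinsert a (c # cs) =
     (if c \<noteq> [] \<and> a \<le> hd c then (a # c) # cs else c # rinsert a cs)"

definition Rr :: "nat list \<Rightarrow> tableau" where
  "Rr w = foldl (\<lambda>T a. rinsert a T) [] w"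

definition A2 :: "nat set" where "A2 = {1, 2}"

definition rps_eq :: "nat list \<Rightarrow> nat list \<Rightarrow> bool" where
  "rps_eq u v \<longleftrightarrow> Rr u = Rr v"

text \<open>Padded convolutions; None plays the role of the padding symbol.\<close>
definition deltaR :: "'a list \<Rightarrow> 'a list \<Rightarrow> ('a option \<times> 'a option) list" where
  "deltaR u v = (let n = max (length u) (length v) in
     zip (map Some u @ replicate (n - length u) None)
         (map Some v @ replicate (n - length v) None))"

definition deltaL :: "'a list \<Rightarrow> 'a list \<Rightarrow> ('a option \<times> 'a option) list" where
  "deltaL u v = (let n = max (length u) (length v) in
     zip (replicate (n - length u) None @ map Some u)
         (replicate (n - length v) None @ map Some v))"

definition regular :: "'b list set \<Rightarrow> bool" where
  "regular L \<longleftrightarrow> (\<exists>(Q::nat set) q0 (\<delta>::nat \<Rightarrow> 'b \<Rightarrow> nat) F.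
      finite Q \<and> q0 \<in> Q \<and> (\<forall>q\<in>Q. \<forall>x. \<delta> q x \<in> Q) \<and> F \<subseteq> Q \<and>
      L = {w. foldl \<delta> q0 w \<in> F})"

definition biautomatic :: "'a set \<Rightarrow> ('a list \<Rightarrow> 'a list \<Rightarrow> bool) \<Rightarrow> 'a list set \<Rightarrow> bool" where
  "biautomatic \<Sigma> eq L \<longleftrightarrow>
     finite \<Sigma> \<and> L \<subseteq> lists \<Sigma> \<and> regular L \<and>
     (\<forall>w\<in>lists \<Sigma>. \<exists>u\<in>L. eq u w) \<and>
     (\<forall>a \<in> {[]} \<union> {[x] |x. x \<in> \<Sigma>}.
        regular ((\<lambda>(u,v). deltaR u v) ` {(u,v). u \<in> L \<and> v \<in> L \<and> eq (u @ a) v}) \<and>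
        regular ((\<lambda>(u,v). deltaR u v) ` {(u,v). u \<in> L \<and> v \<in> L \<and> eq (a @ u) v}) \<and>
        regular ((\<lambda>(u,v). deltaL u v) ` {(u,v). u \<in> L \<and> v \<in> L \<and> eq (u @ a) v}) \<and>
        regular ((\<lambda>(u,v). deltaL u v) ` {(u,v). u \<in> L \<and> v \<in> L \<and> eq (a @ u) v}))"

definition J :: "nat list set" where
  "J = {replicate i 2 @ [1] @ replicate j 2 @ replicate k 1 | i j k. True}
       \<union> {replicate i 2 | i. True}"

end

theory Submission
  imports Defs
begin

(*
  Right insertion turns the word 2^n into the single column 2^n and the word 2^i 1 2^j 1^k into a
  first column with k+1 entries 1 at the bottom and i entries 2 above them, followed by a column
  2^j.  These tableaux are pairwise distinct, and inserting one more letter into such a tableau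
  gives another one, so J is a cross-section of rps_2 and multiplication by a letter on either side
  acts on the exponents of a normal form by an explicit map (left multiplication by 1 moves the
  block 2^i to the second column).  Each relation L_a, _aL is therefore the graph of such a map, and
  after distinguishing which exponents vanish its padded convolutions, on either side, are finite
  unions of families w_0 c_1^* w_1 ... c_r^* w_r with independent exponents.  Such languages have
  finitely many left quotients, hence are regular by the Myhill-Nerode construction.
*)

definition Derivs :: "'a list \<Rightarrow> 'a list set \<Rightarrow> 'a list set" where
  "Derivs w L = {v. w @ v \<in> L}"

definition finite_Derivs :: "'a list set \<Rightarrow> bool" where
  "finite_Derivs L \<longleftrightarrow> finite (range (\<lambda>w. Derivs w L))"

lemma Derivs_Nil [simp]: "Derivs [] L = L"
  by (simp add: Derivs_def)

lemma Derivs_Derivs: "Derivs v (Derivs w L) = Derivs (w @ v) L"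
  by (simp add: Derivs_def)

lemma regular_if_finite_Derivs:
  assumes "finite_Derivs L"
  shows "regular L"
proof -
  let ?D = "range (\<lambda>w. Derivs w L)"
  obtain n and f :: "nat \<Rightarrow> 'a list set" where D: "?D = f ` {..<n}"
    using assms unfolding finite_Derivs_def finite_conv_nat_seg_image lessThan_def by blast
  define idx where "idx = inv_into {..<n} f"
  have idx: "idx (Derivs w L) < n" "f (idx (Derivs w L)) = Derivs w L" for w
  proof -
    have m: "Derivs w L \<in> f ` {..<n}" using D by (metis rangeI)
    show "idx (Derivs w L) < n" "f (idx (Derivs w L)) = Derivs w L"
      using inv_into_into[OF m] f_inv_into_f[OF m] unfolding idx_def by simp_all
  qed
  define \<delta> where "\<delta> q x = idx (Derivs [x] (f q))" for q x
  have run: "foldl \<delta> (idx L) w = idx (Derivs w L)" for w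
    by (induction w rule: rev_induct) (use idx in \<open>simp_all add: \<delta>_def Derivs_Derivs\<close>)
  have closed: "\<delta> q x < n" if "q < n" for q x
  proof -
    obtain w where "f q = Derivs w L" using D \<open>q < n\<close> by (metis imageI lessThan_iff rangeE)
    then show ?thesis using idx(1)[of "w @ [x]"] by (simp add: \<delta>_def Derivs_Derivs)
  qed
  have "L = {w. foldl \<delta> (idx L) w \<in> {q. q < n \<and> [] \<in> f q}}"
    using idx by (auto simp: run Derivs_def)
  moreover have "idx L < n" using idx(1)[of "[]"] by simp
  ultimately show ?thesis
    unfolding regular_def using closed
    by (intro exI[of _ "{..<n}"] exI[of _ "idx L"] exI[of _ \<delta>] exI[of _ "{q. q < n \<and> [] \<in> f q}"]) auto
qed

lemma finite_Derivs_Un: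
  assumes "finite_Derivs A" "finite_Derivs B"
  shows "finite_Derivs (A \<union> B)"
proof -
  have "Derivs w (A \<union> B) = (\<lambda>(X, Y). X \<union> Y) (Derivs w A, Derivs w B)" for w
    by (auto simp: Derivs_def)
  then have "range (\<lambda>w. Derivs w (A \<union> B)) \<subseteq>
      (\<lambda>(X, Y). X \<union> Y) ` (range (\<lambda>w. Derivs w A) \<times> range (\<lambda>w. Derivs w B))"
    by blast
  moreover have "finite (range (\<lambda>w. Derivs w A) \<times> range (\<lambda>w. Derivs w B))"
    using assms by (simp add: finite_Derivs_def)
  ultimately show ?thesis
    unfolding finite_Derivs_def by (meson finite_imageI finite_subset)
qed

lemma finite_Derivs_image_Cons:
  assumes "finite_Derivs L"
  shows "finite_Derivs ((#) c ` L)"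
proof -
  have "Derivs w ((#) c ` L) \<in> {(#) c ` L, {}} \<union> range (\<lambda>w. Derivs w L)" for w
    by (cases w) (auto simp: Derivs_def)
  then show ?thesis
    using assms unfolding finite_Derivs_def by (metis finite_UnI finite.emptyI finite_insert finite_subset image_subsetI)
qed

definition conc :: "'a list set \<Rightarrow> 'a list set \<Rightarrow> 'a list set" where
  "conc A B = {x @ y |x y. x \<in> A \<and> y \<in> B}"

lemma Derivs_conc:
  "Derivs w (conc A B) = conc (Derivs w A) B \<union> \<Union>{Derivs w2 B |w1 w2. w = w1 @ w2 \<and> w1 \<in> A}"
proof (intro equalityI subsetI)
  fix v assume "v \<in> Derivs w (conc A B)"
  then obtain x y where xy: "w @ v = x @ y" "x \<in> A" "y \<in> B" by (auto simp: Derivs_def conc_def)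
  then obtain us where "w = x @ us \<and> us @ v = y \<or> w @ us = x \<and> v = us @ y"
    by (auto simp: append_eq_append_conv2)
  then show "v \<in> conc (Derivs w A) B \<union> \<Union>{Derivs w2 B |w1 w2. w = w1 @ w2 \<and> w1 \<in> A}"
  proof
    assume "w = x @ us \<and> us @ v = y"
    then have "v \<in> Derivs us B" "w = x @ us" using xy by (simp_all add: Derivs_def)
    then show ?thesis using xy by blast
  next
    assume "w @ us = x \<and> v = us @ y"
    then show ?thesis using xy by (auto simp: Derivs_def conc_def)
  qed
next
  fix v assume "v \<in> conc (Derivs w A) B \<union> \<Union>{Derivs w2 B |w1 w2. w = w1 @ w2 \<and> w1 \<in> A}"
  then show "v \<in> Derivs w (conc A B)"
    by (auto simp: Derivs_def conc_def) (metis append.assoc, metis)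
qed

lemma finite_Derivs_conc:
  assumes "finite_Derivs A" "finite_Derivs B"
  shows "finite_Derivs (conc A B)"
proof -
  let ?DA = "range (\<lambda>w. Derivs w A)" and ?DB = "range (\<lambda>w. Derivs w B)"
  have "Derivs w (conc A B) \<in> (\<lambda>(X, Y). conc X B \<union> \<Union>Y) ` (?DA \<times> Pow ?DB)" for w
  proof (rule image_eqI)
    show "Derivs w (conc A B) = (\<lambda>(X, Y). conc X B \<union> \<Union>Y)
        (Derivs w A, {Derivs w2 B |w1 w2. w = w1 @ w2 \<and> w1 \<in> A})"
      by (simp add: Derivs_conc)
  qed blast
  moreover have "finite (?DA \<times> Pow ?DB)"
    using assms by (simp add: finite_Derivs_def)
  ultimately show ?thesis
    unfolding finite_Derivs_def by (meson finite_imageI finite_subset image_subsetI)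
qed

lemma finite_Derivs_replicates: "finite_Derivs (range (\<lambda>n. replicate n c))"
proof -
  have reps: "range (\<lambda>n. replicate n c) = {x. set x \<subseteq> {c}}"
    by (auto simp: subset_iff intro: range_eqI replicate_length_same[symmetric])
  have "Derivs w {x. set x \<subseteq> {c}} \<in> {{x. set x \<subseteq> {c}}, {}}" for w
    by (auto simp: Derivs_def)
  then show ?thesis
    unfolding finite_Derivs_def reps by (meson finite.emptyI finite_insert finite_subset image_subsetI)
qed

lemma finite_Derivs_singleton_Nil: "finite_Derivs {[]}"
proof -
  have "Derivs w {[]} \<in> {{[]}, {}}" for w :: "'a list"
    by (auto simp: Derivs_def)
  then show ?thesis
    unfolding finite_Derivs_def by (meson finite.emptyI finite_insert finite_subset image_subsetI)
qed

lemma finite_Derivs_Cons_family: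
  assumes "finite_Derivs {w. \<exists>p. w = G p}"
  shows "finite_Derivs {w. \<exists>p. w = c # G p}"
proof -
  have "{w. \<exists>p. w = c # G p} = (#) c ` {w. \<exists>p. w = G p}" by blast
  then show ?thesis using finite_Derivs_image_Cons[OF assms] by simp
qed

lemma finite_Derivs_replicate_family:
  assumes "finite_Derivs {w. \<exists>p. w = G p}"
  shows "finite_Derivs {w. \<exists>n p. w = replicate n c @ G p}"
proof -
  have "{w. \<exists>n p. w = replicate n c @ G p} = conc (range (\<lambda>n. replicate n c)) {w. \<exists>p. w = G p}"
    by (auto simp: conc_def)
  then show ?thesis using finite_Derivs_conc[OF finite_Derivs_replicates assms] by simp
qed

lemma ex_nat_cases: "(\<exists>n. P n) \<longleftrightarrow> P 0 \<or> (\<exists>n. P (Suc n))"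
  by (metis not0_implies_Suc)

lemma finite_Derivs_case_nat:
  "finite_Derivs {F} \<Longrightarrow> finite_Derivs {w. \<exists>n. w = G n} \<Longrightarrow>
    finite_Derivs {w. \<exists>n. w = (case n of 0 \<Rightarrow> F | Suc n \<Rightarrow> G n)}"
  using finite_Derivs_Un[of "{F}"]
  by (simp add: Collect_disj_eq ex_nat_cases[of "\<lambda>n. _ = case_nat _ _ n"])

lemma finite_Derivs_case_nat_1of2:
  "finite_Derivs {w. \<exists>k. w = F k} \<Longrightarrow> finite_Derivs {w. \<exists>j k. w = G j k} \<Longrightarrow>
    finite_Derivs {w. \<exists>j k. w = (case j of 0 \<Rightarrow> F k | Suc j \<Rightarrow> G j k)}"
  using finite_Derivs_Un
  by (simp add: Collect_disj_eq ex_disj_distrib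
      ex_nat_cases[of "\<lambda>j. \<exists>k. _ = case_nat (_ k) (\<lambda>j. _ j k) j"])

lemma finite_Derivs_case_nat_1of3:
  "finite_Derivs {w. \<exists>j k. w = F j k} \<Longrightarrow> finite_Derivs {w. \<exists>i j k. w = G i j k} \<Longrightarrow>
    finite_Derivs {w. \<exists>i j k. w = (case i of 0 \<Rightarrow> F j k | Suc i \<Rightarrow> G i j k)}"
  using finite_Derivs_Un
  by (simp add: Collect_disj_eq ex_disj_distrib
      ex_nat_cases[of "\<lambda>i. \<exists>j k. _ = case_nat (_ j k) (\<lambda>i. _ i j k) i"])

(* One instance per number of curried parameters, so that families such as
   {w. \<exists>i j k. w = ...} are taken apart by plain rule application. *)
lemmas finite_Derivs_patterns =
  finite_Derivs_Un finite_Derivs_singleton_Nil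
  finite_Derivs_Cons_family[where G = "\<lambda>_ :: unit. G" for G, simplified]
  finite_Derivs_Cons_family
  finite_Derivs_Cons_family[where G = "\<lambda>(i, j). G i j" for G, simplified]
  finite_Derivs_Cons_family[where G = "\<lambda>(i, j, k). G i j k" for G, simplified]
  finite_Derivs_replicate_family[where G = "\<lambda>_ :: unit. []", simplified]
  finite_Derivs_replicate_family[where G = "\<lambda>_ :: unit. G" for G, simplified]
  finite_Derivs_replicate_family
  finite_Derivs_replicate_family[where G = "\<lambda>(i, j). G i j" for G, simplified]
  finite_Derivs_case_nat finite_Derivs_case_nat_1of2 finite_Derivs_case_nat_1of3

lemma deltaR_eqI:
  assumes "map fst w = map Some u @ replicate (length v - length u) None"
    and "map snd w = map Some v @ replicate (length u - length v) None"
  shows "deltaR u v = w"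
proof -
  have "w = zip (map fst w) (map snd w)" by (simp add: zip_map_fst_snd)
  then show ?thesis using assms by (simp add: deltaR_def Let_def max_def)
qed

lemma deltaL_eqI:
  assumes "map fst w = replicate (length v - length u) None @ map Some u"
    and "map snd w = replicate (length u - length v) None @ map Some v"
  shows "deltaL u v = w"
proof -
  have "w = zip (map fst w) (map snd w)" by (simp add: zip_map_fst_snd)
  then show ?thesis using assms by (simp add: deltaL_def Let_def max_def)
qed

datatype nf = Twos nat | Mixed nat nat nat

fun nf_word :: "nf \<Rightarrow> nat list" where
  "nf_word (Twos n) = replicate n 2"
| "nf_word (Mixed i j k) = replicate i 2 @ 1 # replicate j 2 @ replicate k 1"

fun nf_tableau :: "nf \<Rightarrow> tableau" where
  "nf_tableau (Twos n) = (if n = 0 then [] else [replicate n 2])"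
| "nf_tableau (Mixed i j k) =
    (replicate (Suc k) 1 @ replicate i 2) # (if j = 0 then [] else [replicate j 2])"

fun rmul :: "nat \<Rightarrow> nf \<Rightarrow> nf" where
  "rmul a (Twos n) = (if a = 1 then Mixed n 0 0 else Twos (Suc n))"
| "rmul a (Mixed i j k) = (if a = 1 then Mixed i j (Suc k) else Mixed i (Suc j) k)"

fun lmul :: "nat \<Rightarrow> nf \<Rightarrow> nf" where
  "lmul a (Twos n) = (if a = 1 then Mixed 0 n 0 else Twos (Suc n))"
| "lmul a (Mixed i j k) = (if a = 1 then Mixed 0 (i + j) (Suc k) else Mixed (Suc i) j k)"

definition nf_of :: "nat list \<Rightarrow> nf" where
  "nf_of w = foldl (\<lambda>p a. rmul a p) (Twos 0) w"

lemma Rr_snoc: "Rr (w @ [a]) = rinsert a (Rr w)"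
  by (simp add: Rr_def)

lemma rinsert_nf_tableau: "a \<in> A2 \<Longrightarrow> rinsert a (nf_tableau p) = nf_tableau (rmul a p)"
  by (cases p) (auto simp: A2_def)

lemma Rr_eq_nf_tableau_nf_of: "set w \<subseteq> A2 \<Longrightarrow> Rr w = nf_tableau (nf_of w)"
  by (induction w rule: rev_induct) (simp_all add: Rr_snoc rinsert_nf_tableau nf_of_def, simp add: Rr_def)

lemma foldl_rmul_replicate:
  "foldl (\<lambda>p a. rmul a p) (Twos m) (replicate n 2) = Twos (m + n)"
  "foldl (\<lambda>p a. rmul a p) (Mixed i j k) (replicate n 2) = Mixed i (j + n) k"
  "foldl (\<lambda>p a. rmul a p) (Mixed i j k) (replicate n 1) = Mixed i j (k + n)"
  by (induction n arbitrary: m j k) simp_all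

(* One_nat_def would rewrite the letter 1 to Suc 0 and block foldl_rmul_replicate. *)
lemma nf_of_nf_word: "nf_of (nf_word p) = p"
  by (cases p) (simp_all add: nf_of_def foldl_rmul_replicate del: One_nat_def)

lemma set_nf_word: "set (nf_word p) \<subseteq> A2"
  by (cases p) (auto simp: A2_def)

lemma Rr_nf_word: "Rr (nf_word p) = nf_tableau p"
  using Rr_eq_nf_tableau_nf_of[OF set_nf_word] by (simp add: nf_of_nf_word)

lemma replicate_12_inj:
  assumes "replicate m (1::nat) @ replicate n 2 = replicate m' 1 @ replicate n' 2"
  shows "m = m'" "n = n'"
  using arg_cong[OF assms, of "\<lambda>w. length (filter ((=) 1) w)"]
    arg_cong[OF assms, of "\<lambda>w. length (filter ((=) 2) w)"]
  by simp_all

lemma inj_nf_tableau: "inj nf_tableau"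
proof (rule injI)
  fix p q :: nf assume "nf_tableau p = nf_tableau q"
  then show "p = q"
    by (cases p; cases q) (auto split: if_splits dest: replicate_12_inj arg_cong[where f = set] simp del: One_nat_def)
qed

lemma nf_of_Cons_nf_word: "a \<in> A2 \<Longrightarrow> nf_of (a # nf_word p) = lmul a p"
  by (cases p) (auto simp: A2_def nf_of_def foldl_rmul_replicate simp del: One_nat_def)

lemma nf_of_nf_word_snoc: "nf_of (nf_word p @ [a]) = rmul a p"
  by (simp add: nf_of_def nf_of_nf_word[unfolded nf_of_def])

lemma J_eq_range_nf_word: "J = range nf_word"
proof (intro equalityI subsetI)
  fix w assume "w \<in> J"
  then show "w \<in> range nf_word"
    unfolding J_def by (auto intro: range_eqI[where x = "Mixed _ _ _"] range_eqI[where x = "Twos _"])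
next
  fix w assume "w \<in> range nf_word"
  then obtain p where "w = nf_word p" by blast
  then show "w \<in> J" by (cases p) (auto simp: J_def)
qed

lemma mult_rel_eq_range:
  assumes "\<And>p. set (f (nf_word p)) \<subseteq> A2"
  shows "{(u, v). u \<in> J \<and> v \<in> J \<and> rps_eq (f u) v} =
    range (\<lambda>p. (nf_word p, nf_word (nf_of (f (nf_word p)))))"
proof -
  have "rps_eq (f (nf_word p)) (nf_word q) \<longleftrightarrow> q = nf_of (f (nf_word p))" for p q
    using inj_nf_tableau Rr_eq_nf_tableau_nf_of[OF assms] by (auto simp: rps_eq_def Rr_nf_word inj_eq)
  then show ?thesis
    unfolding J_eq_range_nf_word by auto
qed

definition conv_graph ::
    "(nat list \<Rightarrow> nat list \<Rightarrow> 'c list) \<Rightarrow> (nf \<Rightarrow> nf) \<Rightarrow> nf \<Rightarrow> 'c list" where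
  "conv_graph d m p = d (nf_word p) (nf_word (m p))"

lemma regular_mult_rel:
  assumes "\<And>p. set (f (nf_word p)) \<subseteq> A2"
    and "finite_Derivs (range (conv_graph d (\<lambda>p. nf_of (f (nf_word p)))))"
  shows "regular ((\<lambda>(u, v). d u v) ` {(u, v). u \<in> J \<and> v \<in> J \<and> rps_eq (f u) v})"
  using regular_if_finite_Derivs[OF assms(2)]
  by (simp add: mult_rel_eq_range[of f, OF assms(1)] image_image conv_graph_def)

lemma range_nf: "range f = {w. \<exists>n. w = f (Twos n)} \<union> {w. \<exists>i j k. w = f (Mixed i j k)}"
  by (auto, metis nf.exhaust)

lemmas conv_graph_simps = replicate_add replicate_append_same replicate_app_Cons_same

lemma conv_graph_deltaR_id:
  "conv_graph deltaR id (Twos n) = replicate n (Some 2, Some 2)"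
  "conv_graph deltaR id (Mixed i j k) =
    replicate i (Some 2, Some 2) @ (Some 1, Some 1) # replicate j (Some 2, Some 2) @ replicate k (Some 1, Some 1)"
  unfolding conv_graph_def by (auto intro!: deltaR_eqI simp: conv_graph_simps)

lemma conv_graph_deltaR_rmul1:
  "conv_graph deltaR (rmul 1) (Twos n) = replicate n (Some 2, Some 2) @ [(None, Some 1)]"
  "conv_graph deltaR (rmul 1) (Mixed i j k) =
    replicate i (Some 2, Some 2) @ (Some 1, Some 1) # replicate j (Some 2, Some 2) @ replicate k (Some 1, Some 1) @
    [(None, Some 1)]"
  unfolding conv_graph_def by (auto intro!: deltaR_eqI simp: conv_graph_simps)

lemma conv_graph_deltaR_rmul2:
  "conv_graph deltaR (rmul 2) (Twos n) = replicate n (Some 2, Some 2) @ [(None, Some 2)]"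
  "conv_graph deltaR (rmul 2) (Mixed i j k) =
    replicate i (Some 2, Some 2) @ (Some 1, Some 1) # replicate j (Some 2, Some 2) @
    (case k of
      0 \<Rightarrow> [(None, Some 2)]
    | Suc k \<Rightarrow> (Some 1, Some 2) # replicate k (Some 1, Some 1) @ [(None, Some 1)])"
  unfolding conv_graph_def by (auto intro!: deltaR_eqI simp: conv_graph_simps split: nat.split)

lemma conv_graph_deltaR_lmul1:
  "conv_graph deltaR (lmul 1) (Twos n) =
    (case n of
      0 \<Rightarrow> [(None, Some 1)]
    | Suc n \<Rightarrow> (Some 2, Some 1) # replicate n (Some 2, Some 2) @ [(None, Some 2)])"
  "conv_graph deltaR (lmul 1) (Mixed i j k) = (case i of
      0 \<Rightarrow> (Some 1, Some 1) # replicate j (Some 2, Some 2) @ replicate k (Some 1, Some 1) @ [(None, Some 1)]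
    | Suc i \<Rightarrow> (Some 2, Some 1) # replicate i (Some 2, Some 2) @ (Some 1, Some 2) # replicate j (Some 2, Some 2) @
        replicate k (Some 1, Some 1) @ [(None, Some 1)])"
  unfolding conv_graph_def by (auto intro!: deltaR_eqI simp: conv_graph_simps split: nat.split)

lemma conv_graph_deltaR_lmul2:
  "conv_graph deltaR (lmul 2) (Twos n) = replicate n (Some 2, Some 2) @ [(None, Some 2)]"
  "conv_graph deltaR (lmul 2) (Mixed i j k) =
    replicate i (Some 2, Some 2) @ (Some 1, Some 2) # (case j of
      0 \<Rightarrow> replicate k (Some 1, Some 1) @ [(None, Some 1)]
    | Suc j \<Rightarrow> (Some 2, Some 1) # replicate j (Some 2, Some 2) @
        (case k of
          0 \<Rightarrow> [(None, Some 2)]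
        | Suc k \<Rightarrow> (Some 1, Some 2) # replicate k (Some 1, Some 1) @ [(None, Some 1)]))"
  unfolding conv_graph_def by (auto intro!: deltaR_eqI simp: conv_graph_simps split: nat.split)

lemma conv_graph_deltaL_id:
  "conv_graph deltaL id (Twos n) = replicate n (Some 2, Some 2)"
  "conv_graph deltaL id (Mixed i j k) =
    replicate i (Some 2, Some 2) @ (Some 1, Some 1) # replicate j (Some 2, Some 2) @ replicate k (Some 1, Some 1)"
  unfolding conv_graph_def by (auto intro!: deltaL_eqI simp: conv_graph_simps)

lemma conv_graph_deltaL_rmul1:
  "conv_graph deltaL (rmul 1) (Twos n) =
    (case n of
      0 \<Rightarrow> [(None, Some 1)]
    | Suc n \<Rightarrow> (None, Some 2) # replicate n (Some 2, Some 2) @ [(Some 2, Some 1)])"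
  "conv_graph deltaL (rmul 1) (Mixed i j k) = (case i of
      0 \<Rightarrow> (None, Some 1) # (case j of
        0 \<Rightarrow> (Some 1, Some 1) # replicate k (Some 1, Some 1)
      | Suc j \<Rightarrow> (Some 1, Some 2) # replicate j (Some 2, Some 2) @ (Some 2, Some 1) # replicate k (Some 1, Some 1))
    | Suc i \<Rightarrow> (None, Some 2) # replicate i (Some 2, Some 2) @ (Some 2, Some 1) # (case j of
        0 \<Rightarrow> (Some 1, Some 1) # replicate k (Some 1, Some 1)
      | Suc j \<Rightarrow> (Some 1, Some 2) # replicate j (Some 2, Some 2) @ (Some 2, Some 1) # replicate k (Some 1, Some 1)))"
  unfolding conv_graph_def by (auto intro!: deltaL_eqI simp: conv_graph_simps split: nat.split)

lemma conv_graph_deltaL_rmul2: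
  "conv_graph deltaL (rmul 2) (Twos n) = (None, Some 2) # replicate n (Some 2, Some 2)"
  "conv_graph deltaL (rmul 2) (Mixed i j k) = (case i of
      0 \<Rightarrow> (None, Some 1) # (Some 1, Some 2) # replicate j (Some 2, Some 2) @ replicate k (Some 1, Some 1)
    | Suc i \<Rightarrow> (None, Some 2) # replicate i (Some 2, Some 2) @ (Some 2, Some 1) # (Some 1, Some 2) #
        replicate j (Some 2, Some 2) @ replicate k (Some 1, Some 1))"
  unfolding conv_graph_def by (auto intro!: deltaL_eqI simp: conv_graph_simps split: nat.split)

lemma conv_graph_deltaL_lmul1:
  "conv_graph deltaL (lmul 1) (Twos n) = (None, Some 1) # replicate n (Some 2, Some 2)"
  "conv_graph deltaL (lmul 1) (Mixed i j k) = (None, Some 1) # replicate i (Some 2, Some 2) @ (case j of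
      0 \<Rightarrow> (Some 1, Some 1) # replicate k (Some 1, Some 1)
    | Suc j \<Rightarrow> (Some 1, Some 2) # replicate j (Some 2, Some 2) @ (Some 2, Some 1) # replicate k (Some 1, Some 1))"
  unfolding conv_graph_def by (auto intro!: deltaL_eqI simp: conv_graph_simps split: nat.split)

lemma conv_graph_deltaL_lmul2:
  "conv_graph deltaL (lmul 2) (Twos n) = (None, Some 2) # replicate n (Some 2, Some 2)"
  "conv_graph deltaL (lmul 2) (Mixed i j k) =
    (None, Some 2) # replicate i (Some 2, Some 2) @ (Some 1, Some 1) # replicate j (Some 2, Some 2) @
    replicate k (Some 1, Some 1)"
  unfolding conv_graph_def by (auto intro!: deltaL_eqI simp: conv_graph_simps)

lemmas conv_graph_eqs =
  conv_graph_deltaR_id conv_graph_deltaR_rmul1 conv_graph_deltaR_rmul2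
  conv_graph_deltaR_lmul1 conv_graph_deltaR_lmul2
  conv_graph_deltaL_id conv_graph_deltaL_rmul1 conv_graph_deltaL_rmul2
  conv_graph_deltaL_lmul1 conv_graph_deltaL_lmul2

lemma finite_Derivs_range_conv_graph:
  assumes "d \<in> {deltaR, deltaL}" and "m \<in> {id, rmul 1, rmul 2, lmul 1, lmul 2}"
  shows "finite_Derivs (range (conv_graph d m))"
  using assms
  by (elim insertE emptyE) (simp_all only: range_nf conv_graph_eqs, (rule finite_Derivs_patterns)+)

lemma regular_right_mult:
  assumes "a \<in> {[]} \<union> {[x] |x. x \<in> A2}" and "d \<in> {deltaR, deltaL}"
  shows "regular ((\<lambda>(u, v). d u v) ` {(u, v). u \<in> J \<and> v \<in> J \<and> rps_eq (u @ a) v})"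
proof (rule regular_mult_rel)
  show "set (nf_word p @ a) \<subseteq> A2" for p
    using assms(1) set_nf_word by auto
  have "(\<lambda>p. nf_of (nf_word p @ a)) \<in> {id, rmul 1, rmul 2, lmul 1, lmul 2}"
    using assms(1) by (auto simp: A2_def nf_of_nf_word nf_of_nf_word_snoc id_def)
  then show "finite_Derivs (range (conv_graph d (\<lambda>p. nf_of (nf_word p @ a))))"
    by (rule finite_Derivs_range_conv_graph[OF assms(2)])
qed

lemma regular_left_mult:
  assumes "a \<in> {[]} \<union> {[x] |x. x \<in> A2}" and "d \<in> {deltaR, deltaL}"
  shows "regular ((\<lambda>(u, v). d u v) ` {(u, v). u \<in> J \<and> v \<in> J \<and> rps_eq (a @ u) v})"
proof (rule regular_mult_rel)
  show "set (a @ nf_word p) \<subseteq> A2" for p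
    using assms(1) set_nf_word by auto
  have "(\<lambda>p. nf_of (a @ nf_word p)) \<in> {id, rmul 1, rmul 2, lmul 1, lmul 2}"
    using assms(1) by (auto simp: A2_def nf_of_nf_word nf_of_Cons_nf_word id_def)
  then show "finite_Derivs (range (conv_graph d (\<lambda>p. nf_of (a @ nf_word p))))"
    by (rule finite_Derivs_range_conv_graph[OF assms(2)])
qed

theorem proposition6p5:
  shows "biautomatic A2 rps_eq J"
  unfolding biautomatic_def
proof (intro conjI ballI)
  show "finite A2" by (simp add: A2_def)
  show "J \<subseteq> lists A2"
    using set_nf_word by (auto simp: J_eq_range_nf_word)
  show "regular J"
    unfolding J_eq_range_nf_word
    by (rule regular_if_finite_Derivs) (simp only: range_nf nf_word.simps, (rule finite_Derivs_patterns)+)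
  show "\<exists>u\<in>J. rps_eq u w" if "w \<in> lists A2" for w
  proof -
    have "Rr w = nf_tableau (nf_of w)"
      using that by (intro Rr_eq_nf_tableau_nf_of) auto
    then show ?thesis
      unfolding J_eq_range_nf_word rps_eq_def by (metis Rr_nf_word rangeI)
  qed
qed (use regular_right_mult regular_left_mult in blast)+

end
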